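(* Let $n\ge1$. If $f,g,h:\Omega_n\to\mathbb{R}$ have mutually disjoint supports, then $(f+g+h)^\wedge=(f+g)^\wedge+(f+h)^\wedge+(g+h)^\wedge-\widehat{f}-\widehat{g}-\widehat{h}$.
   Context: $\Omega_n=\{\omega_0,\dots,\omega_{2^n-1}\}$ is the set of strings $\alpha_0\alpha_1\cdots\alpha_n$ with $\alpha_k\in\{0,1\}$, $\alpha_0=0$ ($\omega_j$ being the binary representation of $j$). For $u:\Omega_n\to[0,\infty)$, $\widehat{u}$ is the $2^n\times2^n$ matrix with entries $\widehat{u}_{jk}=\min[u(\omega_j),u(\omega_k)]$. For arbitrary $f:\Omega_n\to\mathbb{R}$, write $f=f^+-f^-$ with $f^+,f^-\ge0$, $f^+f^-=0$, and set $\widehat{f}=\widehat{f^+}-\widehat{f^-}$; $(f)^\wedge$ means $\widehat{f}$. *)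

theory Defs
  imports Main "HOL.Real"
begin

text \<open>Omega_n is identified with the index set {0..<2^n}: the index j stands for the
  string omega_j (binary representation of j, with leading digit 0).
  Functions on Omega_n are modelled as functions nat => real (values outside
  the index set are irrelevant); 2^n x 2^n matrices as nat => nat => real,
  compared only on indices in Omega_n.\<close>

definition Omega :: "nat \<Rightarrow> nat set" where
  "Omega n = {0..<2^n}"

definition pos_part :: "(nat \<Rightarrow> real) \<Rightarrow> nat \<Rightarrow> real" where
  "pos_part f = (\<lambda>j. max (f j) 0)"

definition neg_part :: "(nat \<Rightarrow> real) \<Rightarrow> nat \<Rightarrow> real" where
  "neg_part f = (\<lambda>j. max (- f j) 0)"

definition hat0 :: "(nat \<Rightarrow> real) \<Rightarrow> nat \<Rightarrow> nat \<Rightarrow> real" where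
  "hat0 u = (\<lambda>j k. min (u j) (u k))"

definition hat :: "(nat \<Rightarrow> real) \<Rightarrow> nat \<Rightarrow> nat \<Rightarrow> real" where
  "hat f = (\<lambda>j k. hat0 (pos_part f) j k - hat0 (neg_part f) j k)"

definition disjoint_supp :: "nat \<Rightarrow> (nat \<Rightarrow> real) \<Rightarrow> (nat \<Rightarrow> real) \<Rightarrow> bool" where
  "disjoint_supp n f g = (\<forall>j\<in>Omega n. f j = 0 \<or> g j = 0)"

end

theory Submission
  imports Defs
begin

text \<open>The entry of \<open>hat f\<close> at \<open>(j, k)\<close> is \<open>F (f j) (f k)\<close> for a fixed function \<open>F\<close>
  with \<open>F 0 0 = 0\<close>. Disjointness of supports means that at \<open>j\<close> (and likewise at \<open>k\<close>) at most
  one of \<open>f, g, h\<close> is nonzero, and for such value triples inclusion-exclusion holds for every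
  \<open>F\<close> vanishing at the origin: each term on the right only sees the summands it contains,
  and the multiplicities cancel.\<close>

definition hat_entry :: "real \<Rightarrow> real \<Rightarrow> real" where
  "hat_entry a b = min (max a 0) (max b 0) - min (max (- a) 0) (max (- b) 0)"

lemma hat_entry_zero [simp]: "hat_entry 0 0 = 0"
  by (simp add: hat_entry_def)

lemma hat_eq_hat_entry: "hat f j k = hat_entry (f j) (f k)"
  by (simp add: hat_def hat0_def pos_part_def neg_part_def hat_entry_def)

definition at_most_one_nonzero :: "real \<Rightarrow> real \<Rightarrow> real \<Rightarrow> bool" where
  "at_most_one_nonzero x y z \<longleftrightarrow> (y = 0 \<and> z = 0) \<or> (x = 0 \<and> z = 0) \<or> (x = 0 \<and> y = 0)"

lemma disjoint_supp_at_most_one_nonzero: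
  assumes "disjoint_supp n f g" "disjoint_supp n f h" "disjoint_supp n g h" "j \<in> Omega n"
  shows "at_most_one_nonzero (f j) (g j) (h j)"
  using assms unfolding disjoint_supp_def at_most_one_nonzero_def by blast

lemma inclusion_exclusion_at_most_one_nonzero:
  fixes F :: "real \<Rightarrow> real \<Rightarrow> real"
  assumes "F 0 0 = 0"
    and "at_most_one_nonzero a1 a2 a3" and "at_most_one_nonzero b1 b2 b3"
  shows "F (a1 + a2 + a3) (b1 + b2 + b3)
       = F (a1 + a2) (b1 + b2) + F (a1 + a3) (b1 + b3) + F (a2 + a3) (b2 + b3)
         - F a1 b1 - F a2 b2 - F a3 b3"
  using assms unfolding at_most_one_nonzero_def by (elim disjE conjE) simp_all

theorem lemma5p4:
  fixes n :: nat and f g h :: "nat \<Rightarrow> real"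
  assumes "n \<ge> 1"
    and "disjoint_supp n f g" and "disjoint_supp n f h" and "disjoint_supp n g h"
  shows "\<forall>j\<in>Omega n. \<forall>k\<in>Omega n.
           hat (\<lambda>i. f i + g i + h i) j k
         = hat (\<lambda>i. f i + g i) j k + hat (\<lambda>i. f i + h i) j k + hat (\<lambda>i. g i + h i) j k
           - hat f j k - hat g j k - hat h j k"
proof (intro ballI)
  fix j k assume "j \<in> Omega n" "k \<in> Omega n"
  then have "at_most_one_nonzero (f j) (g j) (h j)" "at_most_one_nonzero (f k) (g k) (h k)"
    using assms(2-4) disjoint_supp_at_most_one_nonzero by blast+
  from inclusion_exclusion_at_most_one_nonzero[where F = hat_entry, OF hat_entry_zero this]
  show "hat (\<lambda>i. f i + g i + h i) j k
         = hat (\<lambda>i. f i + g i) j k + hat (\<lambda>i. f i + h i) j k + hat (\<lambda>i. g i + h i) j k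
           - hat f j k - hat g j k - hat h j k"
    by (simp add: hat_eq_hat_entry)
qed

end
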